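(* Let $\mathcal{F}=\{f_1,\dots,f_M\}$ be a finite set of measurable functions from $\mathcal{X}$ to $[-1,1]$. Assume $\pi$ satisfies $\mathrm{MA}(\kappa)$ for some $\kappa\ge1$, and let $c>0$ be the constant for which $\pi$ satisfies $\mathrm{MAH}(\kappa)$. For $x>0$ and $f\in\mathcal{F}$ set $$Z_x(f)=\frac{A(f)-A_n(f)-(A(f^* )-A_n(f^* ))}{A(f)-A^*+x}.$$ Then for any positive numbers $t,x$ and any integer $n$, $$\mathbb{P}\Big[\max_{f\in\mathcal{F}}Z_x(f)>t\Big]\le M\left(\left(1+\frac{8cx^{1/\kappa}}{n(tx)^2}\right)\exp\left(-\frac{n(tx)^2}{8cx^{1/\kappa}}\right)+\left(1+\frac{16}{3ntx}\right)\exp\left(-\frac{3ntx}{16}\right)\right).$$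
   Context: $(X,Y)$ is a random pair on $\mathcal{X}\times\{-1,1\}$ with distribution $\pi$; $(X_i,Y_i)_{i=1}^n$ are i.i.d. copies. $\eta(x)=\mathbb{P}(Y=1\mid X=x)$, $f^*=\mathrm{sign}(2\eta-1)$, $R(f)=\mathbb{P}(Y\ne f(X))$, $R^*=R(f^* )$. Hinge risk $A(f)=\mathbb{E}[\max(1-Yf(X),0)]$, $A^*=\inf_fA(f)=A(f^* )$; empirical hinge risk $A_n(f)=\frac1n\sum_{i=1}^n\max(1-Y_if(X_i),0)$. $\mathrm{MA}(\kappa)$: exists $c_0>0$ with $\mathbb{E}|f(X)-f^*(X)|\le c_0(R(f)-R^* )^{1/\kappa}$ for all measurable $f:\mathcal{X}\to\{-1,1\}$. $\mathrm{MAH}(\kappa)$ with constant $c$: $\mathbb{E}|f(X)-f^*(X)|\le c(A(f)-A^* )^{1/\kappa}$ for all measurable $f:\mathcal{X}\to[-1,1]$. *)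

theory Defs
  imports "HOL-Probability.Probability"
begin

(* The joint law pi of (X,Y) is a probability measure P on SX \<Otimes> borel (Y real-valued,
   a.s. in {-1,1}). *)

text \<open>eta is a version of P(Y = 1 | X = x): a measurable function with
  P(X \<in> A, Y = 1) = integral over A of eta w.r.t. the law of X.\<close>
definition is_cond_prob_Y1 :: "'a measure \<Rightarrow> ('a \<times> real) measure \<Rightarrow> ('a \<Rightarrow> real) \<Rightarrow> bool" where
  "is_cond_prob_Y1 SX P \<eta> \<longleftrightarrow> \<eta> \<in> borel_measurable SX \<and>
     (\<forall>A \<in> sets SX. measure P (A \<times> {1}) = set_lebesgue_integral (distr P SX fst) A \<eta>)"

text \<open>Bayes rule f* = sign(2 eta - 1), with the convention sign(0) = 1.\<close>
definition bayes :: "('a \<Rightarrow> real) \<Rightarrow> 'a \<Rightarrow> real" where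
  "bayes \<eta> x = (if 2 * \<eta> x - 1 \<ge> 0 then 1 else -1)"

definition risk :: "('a \<times> real) measure \<Rightarrow> ('a \<Rightarrow> real) \<Rightarrow> real" where
  "risk P f = measure P {z \<in> space P. snd z \<noteq> f (fst z)}"

definition hinge_risk :: "('a \<times> real) measure \<Rightarrow> ('a \<Rightarrow> real) \<Rightarrow> real" where
  "hinge_risk P f = (\<integral>z. max (1 - snd z * f (fst z)) 0 \<partial>P)"

definition hinge_opt :: "('a \<times> real) measure \<Rightarrow> ('a \<Rightarrow> real) \<Rightarrow> real" where
  "hinge_opt P \<eta> = hinge_risk P (bayes \<eta>)"

definition emp_hinge_risk :: "nat \<Rightarrow> ('a \<Rightarrow> real) \<Rightarrow> (nat \<Rightarrow> 'a \<times> real) \<Rightarrow> real" where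
  "emp_hinge_risk n f \<omega> = (\<Sum>i<n. max (1 - snd (\<omega> i) * f (fst (\<omega> i))) 0) / real n"

definition MA :: "'a measure \<Rightarrow> ('a \<times> real) measure \<Rightarrow> ('a \<Rightarrow> real) \<Rightarrow> real \<Rightarrow> bool" where
  "MA SX P \<eta> \<kappa> \<longleftrightarrow> (\<exists>c0>0. \<forall>f. f \<in> borel_measurable SX \<and> (\<forall>x\<in>space SX. f x \<in> {-1, 1}) \<longrightarrow>
     (\<integral>z. \<bar>f (fst z) - bayes \<eta> (fst z)\<bar> \<partial>P) \<le> c0 * (risk P f - risk P (bayes \<eta>)) powr (1 / \<kappa>))"

definition MAH :: "'a measure \<Rightarrow> ('a \<times> real) measure \<Rightarrow> ('a \<Rightarrow> real) \<Rightarrow> real \<Rightarrow> real \<Rightarrow> bool" where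
  "MAH SX P \<eta> \<kappa> c \<longleftrightarrow> (\<forall>f. f \<in> borel_measurable SX \<and> (\<forall>x\<in>space SX. f x \<in> {-1..1}) \<longrightarrow>
     (\<integral>z. \<bar>f (fst z) - bayes \<eta> (fst z)\<bar> \<partial>P) \<le> c * (hinge_risk P f - hinge_opt P \<eta>) powr (1 / \<kappa>))"

definition Zx :: "('a \<times> real) measure \<Rightarrow> ('a \<Rightarrow> real) \<Rightarrow> nat \<Rightarrow> real \<Rightarrow> ('a \<Rightarrow> real) \<Rightarrow> (nat \<Rightarrow> 'a \<times> real) \<Rightarrow> real" where
  "Zx P \<eta> n x f \<omega> =
     (hinge_risk P f - emp_hinge_risk n f \<omega> - (hinge_risk P (bayes \<eta>) - emp_hinge_risk n (bayes \<eta>) \<omega>))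
     / (hinge_risk P f - hinge_opt P \<eta> + x)"

end

theory Submission
  imports Defs
begin

(* Fix f and let mu = A(f) - A* >= 0.  The centred excess loss W = mu - (l_f - l_f* ), where l_g
   is the hinge loss of g, satisfies W <= 4 and, since |l_f - l_f*| = |f - f*| <= 2 for labels in
   {-1,1}, E W^2 <= 2 E|f - f*| <= 2 c mu^(1/kappa) by MAH(kappa).  The event Z_x(f) > t says that
   a sum of n independent copies of W exceeds n t (mu + x), so Bernstein's inequality applies.
   According to which of the variance term and the range term dominates its denominator, the bound
   is at most one of the two exponentials (y^2 / y^(1/kappa) increases with y = mu + x >= x).  A
   union bound over F concludes; neither the factors (1 + ...) nor MA(kappa) are needed.  That
   mu >= 0 follows from A(f) - A(f* ) = E[(2 eta(X) - 1)(f*(X) - f(X))]. *)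

lemma exp_le_quadratic_nonpos:
  fixes y :: real
  assumes "y \<le> 0"
  shows "exp y \<le> 1 + y + y\<^sup>2 / 2"
proof -
  have "(\<lambda>y. 1 + y + y\<^sup>2 / 2 - exp y) 0 \<le> (\<lambda>y. 1 + y + y\<^sup>2 / 2 - exp y) y"
  proof (rule DERIV_nonpos_imp_nonincreasing[OF assms])
    fix t :: real
    have "DERIV (\<lambda>y. 1 + y + y\<^sup>2 / 2 - exp y) t :> 1 + t - exp t"
      by (auto intro!: derivative_eq_intros)
    moreover have "1 + t - exp t \<le> 0"
      using exp_ge_add_one_self[of t] by simp
    ultimately show "\<exists>d. DERIV (\<lambda>y. 1 + y + y\<^sup>2 / 2 - exp y) t :> d \<and> d \<le> 0"
      by blast
  qed
  then show ?thesis by simp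
qed

lemma exp_mult_two_minus_le:
  fixes y :: real
  assumes "0 \<le> y"
  shows "exp y * (2 - y) \<le> 2 + y"
proof -
  have "(\<lambda>y. 2 + y - exp y * (2 - y)) 0 \<le> (\<lambda>y. 2 + y - exp y * (2 - y)) y"
  proof (rule DERIV_nonneg_imp_nondecreasing[OF assms])
    fix t :: real
    have "DERIV (\<lambda>y. 2 + y - exp y * (2 - y)) t :> 1 - exp t * (1 - t)"
      by (auto intro!: derivative_eq_intros simp: algebra_simps)
    moreover have "exp t * (1 - t) \<le> exp t * exp (- t)"
      using exp_ge_add_one_self[of "- t"] by (intro mult_left_mono) auto
    ultimately show "\<exists>d. DERIV (\<lambda>y. 2 + y - exp y * (2 - y)) t :> d \<and> 0 \<le> d"
      by (auto simp: exp_minus)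
  qed
  then show ?thesis by simp
qed

lemma exp_mult_one_minus_third_le:
  fixes y :: real
  assumes "0 \<le> y"
  shows "exp y * (1 - y / 3) \<le> 1 + 2 * y / 3 + y\<^sup>2 / 6"
proof -
  let ?g = "\<lambda>y. 1 + 2 * y / 3 + y\<^sup>2 / 6 - exp y * (1 - y / 3)"
  have "?g 0 \<le> ?g y"
  proof (rule DERIV_nonneg_imp_nondecreasing[OF assms])
    fix t :: real
    assume "0 \<le> t"
    have "DERIV ?g t :> (2 + t - exp t * (2 - t)) / 3"
      by (auto intro!: derivative_eq_intros simp: power2_eq_square field_simps)
    then show "\<exists>d. DERIV ?g t :> d \<and> 0 \<le> d"
      using exp_mult_two_minus_le[OF \<open>0 \<le> t\<close>] by auto
  qed
  then show ?thesis by simp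
qed

(* Summing y^k / k! <= (y^2 / 2) (y / 3)^(k - 2) over k >= 2; proved here by differentiation. *)
lemma exp_le_Bernstein:
  fixes y a :: real
  assumes "0 \<le> a" "a < 3" "y \<le> a"
  shows "exp y \<le> 1 + y + y\<^sup>2 / (2 * (1 - a / 3))"
proof (cases "y \<le> 0")
  case True
  have "y\<^sup>2 / 2 \<le> y\<^sup>2 / (2 * (1 - a / 3))"
    using assms by (intro divide_left_mono) auto
  then show ?thesis
    using exp_le_quadratic_nonpos[OF True] by linarith
next
  case False
  have pos: "1 - y / 3 > 0"
    using assms by simp
  have "exp y \<le> (1 + 2 * y / 3 + y\<^sup>2 / 6) / (1 - y / 3)"
    using exp_mult_one_minus_third_le[of y] False pos by (simp add: field_simps)
  also have "\<dots> = 1 + y + y\<^sup>2 / (2 * (1 - y / 3))"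
    using pos by (simp add: field_simps power2_eq_square)
  also have "y\<^sup>2 / (2 * (1 - y / 3)) \<le> y\<^sup>2 / (2 * (1 - a / 3))"
    using assms pos by (intro divide_left_mono) auto
  finally show ?thesis by simp
qed

lemma (in prob_space) integrable_exp_mult_bounded_above:
  fixes W :: "'a \<Rightarrow> real"
  assumes [measurable]: "W \<in> borel_measurable M"
    and bounded: "AE z in M. W z \<le> b" and "0 \<le> l"
  shows "integrable M (\<lambda>z. exp (l * W z))"
  by (rule integrable_const_bound[where B="exp (l * b)"])
     (use \<open>0 \<le> l\<close> in \<open>auto intro!: eventually_mono[OF bounded] mult_left_mono\<close>)

lemma (in prob_space) Bernstein_mgf_bound:
  fixes W :: "'a \<Rightarrow> real" and b B v l :: real
  assumes [measurable]: "W \<in> borel_measurable M"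
    and bounded: "AE z in M. W z \<le> b \<and> \<bar>W z\<bar> \<le> B"
    and centered: "expectation W = 0" and variance: "expectation (\<lambda>z. (W z)\<^sup>2) \<le> v"
    and "0 \<le> l" "0 \<le> b" "l * b < 3"
  shows "expectation (\<lambda>z. exp (l * W z)) \<le> exp (l\<^sup>2 * v / (2 * (1 - l * b / 3)))"
proof -
  define q where "q = l\<^sup>2 / (2 * (1 - l * b / 3))"
  have "q \<ge> 0"
    unfolding q_def using \<open>l * b < 3\<close> by (intro divide_nonneg_pos) (auto simp: mult.commute)
  have int_W: "integrable M W"
    by (rule integrable_const_bound[where B=B]) (use bounded in auto)
  have int_W2: "integrable M (\<lambda>z. (W z)\<^sup>2)"
    by (rule integrable_const_bound[where B="B\<^sup>2"])
       (auto intro!: eventually_mono[OF bounded] simp del: power2_abs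
         intro: order.trans[OF _ power_mono[of "\<bar>_\<bar>" B 2]])
  have "expectation (\<lambda>z. exp (l * W z)) \<le> expectation (\<lambda>z. 1 + l * W z + q * (W z)\<^sup>2)"
  proof (rule integral_mono_AE)
    show "integrable M (\<lambda>z. exp (l * W z))"
      using bounded \<open>0 \<le> l\<close> by (intro integrable_exp_mult_bounded_above) auto
    show "integrable M (\<lambda>z. 1 + l * W z + q * (W z)\<^sup>2)"
      using int_W int_W2 by auto
    show "AE z in M. exp (l * W z) \<le> 1 + l * W z + q * (W z)\<^sup>2"
    proof (rule eventually_mono[OF bounded])
      fix z
      assume "W z \<le> b \<and> \<bar>W z\<bar> \<le> B"
      then have "l * W z \<le> l * b"
        using \<open>0 \<le> l\<close> by (intro mult_left_mono) auto
      from exp_le_Bernstein[OF _ \<open>l * b < 3\<close> this] \<open>0 \<le> l\<close> \<open>0 \<le> b\<close>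
      show "exp (l * W z) \<le> 1 + l * W z + q * (W z)\<^sup>2"
        by (simp add: q_def power_mult_distrib)
    qed
  qed
  also have "\<dots> = 1 + q * expectation (\<lambda>z. (W z)\<^sup>2)"
    using int_W int_W2 centered by (simp add: prob_space)
  also have "\<dots> \<le> 1 + q * v"
    using variance \<open>q \<ge> 0\<close> by (simp add: mult_left_mono)
  also have "\<dots> \<le> exp (q * v)"
    by (rule exp_ge_add_one_self)
  finally show ?thesis
    by (simp add: q_def)
qed

lemma (in prob_space) Chernoff_iid_sum:
  fixes W :: "'a \<Rightarrow> real" and l K a :: real
  assumes [measurable]: "W \<in> borel_measurable M"
    and "integrable M (\<lambda>z. exp (l * W z))" and "l > 0"
    and mgf: "expectation (\<lambda>z. exp (l * W z)) \<le> exp K"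
  shows "measure (PiM {..<n} (\<lambda>_. M)) {\<omega> \<in> space (PiM {..<n} (\<lambda>_. M)). a \<le> (\<Sum>i<n. W (\<omega> i))}
           \<le> exp (real n * K - l * a)"
proof -
  interpret product_prob_space "\<lambda>_. M" "{..<n}" ..
  let ?Mn = "PiM {..<n} (\<lambda>_. M)"
  have mgf_nn: "(\<integral>\<^sup>+z. ennreal (exp (l * W z)) \<partial>M) \<le> ennreal (exp K)"
    using mgf by (subst nn_integral_eq_integral) (auto intro: assms ennreal_leI)
  have "emeasure ?Mn {\<omega> \<in> space ?Mn. a \<le> (\<Sum>i<n. W (\<omega> i))}
        \<le> ennreal (exp (- l * a))
          * (\<integral>\<^sup>+\<omega>. ennreal (exp (l * (\<Sum>i<n. W (\<omega> i)))) * indicator (space ?Mn) \<omega> \<partial>?Mn)"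
    by (rule Chernoff_ineq_nn_integral_ge[OF \<open>l > 0\<close>]) auto
  also have "(\<integral>\<^sup>+\<omega>. ennreal (exp (l * (\<Sum>i<n. W (\<omega> i)))) * indicator (space ?Mn) \<omega> \<partial>?Mn)
           = (\<integral>\<^sup>+\<omega>. (\<Prod>i\<in>{..<n}. ennreal (exp (l * W (\<omega> i)))) \<partial>?Mn)"
    by (intro nn_integral_cong) (simp add: sum_distrib_left exp_sum prod_ennreal)
  also have "\<dots> = (\<Prod>i\<in>{..<n}. \<integral>\<^sup>+z. ennreal (exp (l * W z)) \<partial>M)"
    by (rule product_nn_integral_prod) auto
  also have "ennreal (exp (- l * a)) * \<dots> \<le> ennreal (exp (- l * a)) * (\<Prod>i\<in>{..<n}. ennreal (exp K))"
    by (intro mult_left_mono prod_mono_ennreal mgf_nn) auto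
  also have "\<dots> = ennreal (exp (- l * a) * exp K ^ n)"
    by (simp add: ennreal_mult ennreal_power)
  also have "exp (- l * a) * exp K ^ n = exp (real n * K - l * a)"
    by (simp add: exp_diff exp_of_nat_mult [symmetric] exp_minus field_simps)
  finally show ?thesis
    by (simp add: P.emeasure_eq_measure)
qed

theorem (in prob_space) Bernstein_iid:
  fixes W :: "'a \<Rightarrow> real" and b B v s :: real
  assumes [measurable]: "W \<in> borel_measurable M"
    and bounded: "AE z in M. W z \<le> b \<and> \<bar>W z\<bar> \<le> B"
    and centered: "expectation W = 0" and variance: "expectation (\<lambda>z. (W z)\<^sup>2) \<le> v"
    and "0 \<le> b" "0 < v" "0 < s"
  shows "measure (PiM {..<n} (\<lambda>_. M)) {\<omega> \<in> space (PiM {..<n} (\<lambda>_. M)). real n * s \<le> (\<Sum>i<n. W (\<omega> i))}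
           \<le> exp (- (real n * s\<^sup>2) / (2 * (v + b * s / 3)))"
proof -
  define d where "d = v + b * s / 3"
  have "d > 0"
    using assms by (simp add: d_def add_pos_nonneg)
  define l where "l = s / d"
  have "l > 0"
    using \<open>d > 0\<close> \<open>s > 0\<close> by (simp add: l_def)
  have denominator: "1 - l * b / 3 = v / d"
    using \<open>d > 0\<close> by (simp add: l_def d_def field_simps)
  moreover have "v / d > 0"
    using \<open>d > 0\<close> \<open>v > 0\<close> by simp
  ultimately have "l * b < 3"
    by linarith
  have "l\<^sup>2 * v / (2 * (1 - l * b / 3)) = l\<^sup>2 * d / 2"
    unfolding denominator using \<open>d > 0\<close> \<open>v > 0\<close> by (simp add: field_simps)
  also have "\<dots> = l * s / 2"
    using \<open>d > 0\<close> by (simp add: l_def power2_eq_square)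
  finally have exponent: "l\<^sup>2 * v / (2 * (1 - l * b / 3)) = l * s / 2" .
  have "expectation (\<lambda>z. exp (l * W z)) \<le> exp (l * s / 2)"
    using Bernstein_mgf_bound[OF _ bounded centered variance, of l] \<open>l > 0\<close> \<open>0 \<le> b\<close> \<open>l * b < 3\<close>
    unfolding exponent by simp
  then have "measure (PiM {..<n} (\<lambda>_. M)) {\<omega> \<in> space (PiM {..<n} (\<lambda>_. M)). real n * s \<le> (\<Sum>i<n. W (\<omega> i))}
      \<le> exp (real n * (l * s / 2) - l * (real n * s))"
    using bounded \<open>l > 0\<close>
    by (intro Chernoff_iid_sum integrable_exp_mult_bounded_above[where b=b]) (auto elim: eventually_mono)
  also have "real n * (l * s / 2) - l * (real n * s) = - (real n * s\<^sup>2) / (2 * d)"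
    by (simp add: l_def power2_eq_square field_simps)
  finally show ?thesis
    by (simp add: d_def)
qed

lemma Bernstein_exponent_split:
  fixes x y t c \<kappa> :: real
  assumes "0 < x" "x \<le> y" "0 < t" "0 < c" "1 \<le> \<kappa>"
  shows "exp (- (real n * (t * y)\<^sup>2) / (2 * (2 * c * y powr (1 / \<kappa>) + 4 * (t * y) / 3)))
         \<le> exp (- (real n * (t * x)\<^sup>2) / (8 * c * x powr (1 / \<kappa>))) + exp (- (3 * real n * t * x) / 16)"
proof -
  define s where "s = t * y"
  define v where "v = 2 * c * y powr (1 / \<kappa>)"
  have "s > 0" "v > 0"
    using assms by (auto simp: s_def v_def)
  define A where "A = real n * s\<^sup>2 / (2 * (v + 4 * s / 3))"
  have "real n * (t * x)\<^sup>2 / (8 * c * x powr (1 / \<kappa>)) \<le> A \<or> 3 * real n * t * x / 16 \<le> A"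
  proof (cases "4 * s / 3 \<le> v")
    case True
    have square_div_powr: "z\<^sup>2 / z powr (1 / \<kappa>) = z powr (2 - 1 / \<kappa>)" if "z > 0" for z :: real
      using that by (simp add: powr_diff)
    have "x powr (2 - 1 / \<kappa>) \<le> y powr (2 - 1 / \<kappa>)"
      using assms by (intro powr_mono2) (auto simp: field_simps)
    then have "x\<^sup>2 / x powr (1 / \<kappa>) \<le> y\<^sup>2 / y powr (1 / \<kappa>)"
      using assms by (simp add: square_div_powr)
    then have "real n * t\<^sup>2 / (8 * c) * (x\<^sup>2 / x powr (1 / \<kappa>)) \<le> real n * t\<^sup>2 / (8 * c) * (y\<^sup>2 / y powr (1 / \<kappa>))"
      using assms by (intro mult_left_mono) auto
    also have "\<dots> = real n * s\<^sup>2 / (4 * v)"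
      by (simp add: s_def v_def power_mult_distrib)
    also have "\<dots> \<le> A"
      unfolding A_def using True \<open>v > 0\<close> \<open>s > 0\<close> by (intro divide_left_mono) auto
    finally show ?thesis
      by (simp add: power_mult_distrib)
  next
    case False
    have "3 * real n * t * x / 16 \<le> 3 * real n * t * y / 16"
      using assms by (intro divide_right_mono mult_left_mono) auto
    also have "\<dots> = real n * s\<^sup>2 / (2 * (4 * s / 3 + 4 * s / 3))"
      using \<open>s > 0\<close> by (simp add: s_def field_simps power2_eq_square)
    also have "\<dots> \<le> A"
      unfolding A_def using False \<open>v > 0\<close> \<open>s > 0\<close> by (intro divide_left_mono) auto
    finally show ?thesis ..
  qed
  then have "exp (- A) \<le> exp (- (real n * (t * x)\<^sup>2) / (8 * c * x powr (1 / \<kappa>))) + exp (- (3 * real n * t * x) / 16)"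
    by (auto intro: add_increasing add_increasing2)
  then show ?thesis
    by (simp add: A_def s_def v_def)
qed

lemma AE_notin_if_integral_nonpos:
  fixes g :: "'a \<Rightarrow> real"
  assumes "B \<in> sets M" and "integrable M (\<lambda>u. indicator B u * g u)"
    and pos: "\<And>u. u \<in> B \<Longrightarrow> 0 < g u" and "(\<integral>u. indicator B u * g u \<partial>M) \<le> 0"
  shows "AE u in M. u \<notin> B"
proof -
  have nonneg: "AE u in M. 0 \<le> indicator B u * g u"
    by (rule AE_I2) (auto simp: indicator_def dest: pos[THEN less_imp_le])
  then have "(\<integral>u. indicator B u * g u \<partial>M) = 0"
    using assms(4) integral_nonneg_AE[OF nonneg] by linarith
  then have "AE u in M. indicator B u * g u = 0"
    using integral_nonneg_eq_0_iff_AE[OF assms(2) nonneg] by simp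
  then show ?thesis
    by eventually_elim (auto simp: indicator_def dest: pos)
qed

lemma bayes_in_interval: "bayes \<eta> u \<in> {-1..1}"
  by (simp add: bayes_def)

lemma borel_measurable_bayes [measurable]:
  "\<eta> \<in> borel_measurable SX \<Longrightarrow> bayes \<eta> \<in> borel_measurable SX"
  unfolding bayes_def[abs_def] by measurable

definition hinge_loss :: "('a \<Rightarrow> real) \<Rightarrow> 'a \<times> real \<Rightarrow> real" where
  "hinge_loss f z = max (1 - snd z * f (fst z)) 0"

lemma hinge_risk_eq_integral: "hinge_risk P f = (\<integral>z. hinge_loss f z \<partial>P)"
  by (simp add: hinge_risk_def hinge_loss_def)

lemma emp_hinge_risk_eq_sum: "emp_hinge_risk n f \<omega> = (\<Sum>i<n. hinge_loss f (\<omega> i)) / real n"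
  by (simp add: emp_hinge_risk_def hinge_loss_def)

lemma hinge_loss_eq_linear:
  "snd z \<in> {-1, 1} \<Longrightarrow> f (fst z) \<in> {-1..1} \<Longrightarrow> hinge_loss f z = 1 - snd z * f (fst z)"
  by (auto simp: hinge_loss_def)

lemma abs_hinge_loss_diff:
  assumes "snd z \<in> {-1, 1}" "f (fst z) \<in> {-1..1}" "g (fst z) \<in> {-1..1}"
  shows "\<bar>hinge_loss f z - hinge_loss g z\<bar> = \<bar>f (fst z) - g (fst z)\<bar>"
  using assms by (auto simp: hinge_loss_eq_linear abs_if algebra_simps)

lemma Zx_greater_imp_sum_ge:
  fixes P :: "('a \<times> real) measure" and f \<eta> :: "'a \<Rightarrow> real"
  defines "\<mu> \<equiv> hinge_risk P f - hinge_opt P \<eta>"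
  assumes "t < Zx P \<eta> n x f \<omega>" and "0 < \<mu> + x"
  shows "real n * (t * (\<mu> + x)) \<le> (\<Sum>i<n. \<mu> - (hinge_loss f (\<omega> i) - hinge_loss (bayes \<eta>) (\<omega> i)))"
proof -
  define S where "S = (\<Sum>i<n. hinge_loss f (\<omega> i) - hinge_loss (bayes \<eta>) (\<omega> i))"
  have "Zx P \<eta> n x f \<omega> = (\<mu> - S / real n) / (\<mu> + x)"
    by (simp add: Zx_def \<mu>_def S_def hinge_opt_def emp_hinge_risk_eq_sum sum_subtractf diff_divide_distrib)
  with assms have "t * (\<mu> + x) \<le> \<mu> - S / real n"
    by (simp add: pos_less_divide_eq)
  then have "real n * (t * (\<mu> + x)) \<le> real n * (\<mu> - S / real n)"
    by (rule mult_left_mono) simp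
  also have "\<dots> = real n * \<mu> - S" \<comment> \<open>also for \<open>n = 0\<close>, where \<open>S = 0\<close>\<close>
    by (cases "n = 0") (simp_all add: S_def right_diff_distrib)
  also have "\<dots> = (\<Sum>i<n. \<mu> - (hinge_loss f (\<omega> i) - hinge_loss (bayes \<eta>) (\<omega> i)))"
    by (simp add: S_def sum_subtractf)
  finally show ?thesis .
qed

locale binary_classification = prob_space P
  for P :: "('a \<times> real) measure" +
  fixes SX :: "'a measure" and \<eta> :: "'a \<Rightarrow> real"
  assumes sets_P: "sets P = sets (SX \<Otimes>\<^sub>M (borel :: real measure))"
    and AE_label: "AE z in P. snd z \<in> {-1, 1}"
    and cond_prob: "is_cond_prob_Y1 SX P \<eta>"
begin

lemma space_P: "space P = space SX \<times> UNIV"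
  using sets_eq_imp_space_eq[OF sets_P] by (simp add: space_pair_measure)

lemma measurable_fst_P [measurable]: "fst \<in> measurable P SX"
  using measurable_cong_sets[OF sets_P refl] measurable_fst by blast

lemma borel_measurable_snd_P [measurable]: "snd \<in> borel_measurable P"
  using measurable_cong_sets[OF sets_P refl] measurable_snd by blast

lemma borel_measurable_cond_prob [measurable]: "\<eta> \<in> borel_measurable SX"
  using cond_prob by (simp add: is_cond_prob_Y1_def)

lemma AE_label_space: "AE z in P. fst z \<in> space SX \<and> snd z \<in> {-1, 1}"
  using AE_label AE_space by eventually_elim (auto simp: space_P)

definition marginal :: "'a measure" where
  "marginal = distr P SX fst"

lemma sets_marginal [simp, measurable_cong]: "sets marginal = sets SX"
  and space_marginal [simp]: "space marginal = space SX"
  by (simp_all add: marginal_def)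

lemma prob_space_marginal: "prob_space marginal"
  unfolding marginal_def by (rule prob_space_distr) simp

lemma measure_label_one:
  assumes "B \<in> sets SX"
  shows "measure P (B \<times> {1}) = (\<integral>u. indicator B u * \<eta> u \<partial>marginal)"
  using cond_prob assms by (simp add: is_cond_prob_Y1_def marginal_def set_lebesgue_integral_def)

lemma measure_label_one_le_marginal:
  assumes [measurable]: "B \<in> sets SX"
  shows "measure P (B \<times> {1}) \<le> measure marginal B"
proof -
  have "B \<times> {1} \<in> sets P"
    unfolding sets_P by measurable
  moreover have "B \<times> {1} \<subseteq> fst -` B \<inter> space P"
    using sets.sets_into_space[OF assms] by (auto simp: space_P)
  ultimately show ?thesis
    by (simp add: marginal_def measure_distr finite_measure_mono)
qed

lemma integrable_marginal_indicator_mult: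
  fixes g :: "'a \<Rightarrow> real"
  assumes [measurable]: "B \<in> sets SX" "g \<in> borel_measurable SX"
    and bounded: "\<And>u. u \<in> B \<Longrightarrow> \<bar>g u\<bar> \<le> K"
  shows "integrable marginal (\<lambda>u. indicator B u * g u)"
proof -
  interpret X: prob_space marginal
    by (rule prob_space_marginal)
  show ?thesis
    by (rule X.integrable_const_bound[where B="\<bar>K\<bar>"])
       (auto simp: indicator_def dest: bounded intro!: AE_I2)
qed

(* is_cond_prob_Y1 only constrains set integrals of eta, which are 0 by convention where eta is
   not integrable; on the truncations {|eta| <= k} they are meaningful. *)
lemma AE_cond_prob_not_truncated_above_one:
  "AE u in marginal. u \<notin> {u \<in> space SX. 1 < \<eta> u \<and> \<eta> u \<le> real k}"
proof (rule AE_notin_if_integral_nonpos[where g="\<lambda>u. \<eta> u - 1"])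
  let ?B = "{u \<in> space SX. 1 < \<eta> u \<and> \<eta> u \<le> real k}"
  have [measurable]: "?B \<in> sets SX"
    by measurable
  have "(\<integral>u. indicator ?B u * (\<eta> u - 1) \<partial>marginal)
      = (\<integral>u. indicator ?B u * \<eta> u \<partial>marginal) - measure marginal ?B"
    using integrable_marginal_indicator_mult[of ?B \<eta> "real k"]
      integrable_marginal_indicator_mult[of ?B "\<lambda>_. 1" 1]
    by (simp add: right_diff_distrib)
  also have "\<dots> \<le> 0"
    using measure_label_one[of ?B] measure_label_one_le_marginal[of ?B] by simp
  finally show "(\<integral>u. indicator ?B u * (\<eta> u - 1) \<partial>marginal) \<le> 0" .
  show "integrable marginal (\<lambda>u. indicator ?B u * (\<eta> u - 1))"
    by (rule integrable_marginal_indicator_mult[of _ _ "real k"]) auto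
qed auto

lemma AE_cond_prob_not_truncated_below_zero:
  "AE u in marginal. u \<notin> {u \<in> space SX. - real k \<le> \<eta> u \<and> \<eta> u < 0}"
proof (rule AE_notin_if_integral_nonpos[where g="\<lambda>u. - \<eta> u"])
  let ?B = "{u \<in> space SX. - real k \<le> \<eta> u \<and> \<eta> u < 0}"
  have [measurable]: "?B \<in> sets SX"
    by measurable
  have "0 \<le> measure P (?B \<times> {1})"
    by simp
  then show "(\<integral>u. indicator ?B u * - \<eta> u \<partial>marginal) \<le> 0"
    using measure_label_one[of ?B] by simp
  show "integrable marginal (\<lambda>u. indicator ?B u * - \<eta> u)"
    by (rule integrable_marginal_indicator_mult[of _ _ "real k"]) auto
qed auto

lemma cond_prob_in_unit_interval_AE: "AE u in marginal. 0 \<le> \<eta> u \<and> \<eta> u \<le> 1"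
proof -
  have "AE u in marginal. \<forall>k. u \<notin> {u \<in> space SX. 1 < \<eta> u \<and> \<eta> u \<le> real k}
      \<and> u \<notin> {u \<in> space SX. - real k \<le> \<eta> u \<and> \<eta> u < 0}"
    using AE_cond_prob_not_truncated_above_one AE_cond_prob_not_truncated_below_zero
    by (simp add: AE_all_countable AE_conj_iff)
  then show ?thesis
    using AE_space[of marginal]
  proof eventually_elim
    case (elim u)
    obtain k :: nat where "\<bar>\<eta> u\<bar> \<le> real k"
      using real_arch_simple by blast
    moreover have "u \<notin> {u \<in> space SX. 1 < \<eta> u \<and> \<eta> u \<le> real k}"
      and "u \<notin> {u \<in> space SX. - real k \<le> \<eta> u \<and> \<eta> u < 0}"
      using elim(1) by blast+
    ultimately show ?case
      using elim(2) by auto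
  qed
qed

lemma integrable_cond_prob: "integrable marginal \<eta>"
proof -
  interpret X: prob_space marginal
    by (rule prob_space_marginal)
  show ?thesis
    by (rule X.integrable_const_bound[where B=1])
       (use cond_prob_in_unit_interval_AE in \<open>auto elim: eventually_mono\<close>)
qed

abbreviation label_one :: "('a \<times> real) set" where
  "label_one \<equiv> space SX \<times> {1}"

lemma sets_label_one [measurable]: "label_one \<in> sets P"
  unfolding sets_P by measurable

lemma distr_label_one_eq_density:
  "distr (density P (indicator label_one)) SX fst = density marginal \<eta>"
proof (rule measure_eqI)
  fix A
  assume "A \<in> sets (distr (density P (indicator label_one)) SX fst)"
  then have A [measurable]: "A \<in> sets SX"
    by simp
  have "emeasure (distr (density P (indicator label_one)) SX fst) A
      = emeasure P (label_one \<inter> (fst -` A \<inter> space P))"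
    by (simp add: emeasure_distr emeasure_restricted)
  also have "label_one \<inter> (fst -` A \<inter> space P) = A \<times> {1}"
    using sets.sets_into_space[OF A] by (auto simp: space_P)
  also have "emeasure P (A \<times> {1}) = ennreal (\<integral>u. indicator A u * \<eta> u \<partial>marginal)"
    by (simp add: emeasure_eq_measure measure_label_one)
  also have "\<dots> = (\<integral>\<^sup>+u. ennreal (indicator A u * \<eta> u) \<partial>marginal)"
    using integrable_real_mult_indicator[OF _ integrable_cond_prob, of A] cond_prob_in_unit_interval_AE
    by (subst nn_integral_eq_integral) (auto simp: mult.commute elim!: eventually_mono)
  also have "\<dots> = (\<integral>\<^sup>+u. ennreal (\<eta> u) * indicator A u \<partial>marginal)"
    by (intro nn_integral_cong) (simp split: split_indicator)
  also have "\<dots> = emeasure (density marginal \<eta>) A"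
    by (simp add: emeasure_density)
  finally show "emeasure (distr (density P (indicator label_one)) SX fst) A = emeasure (density marginal \<eta>) A" .
qed simp

lemma integral_label_one:
  assumes [measurable]: "g \<in> borel_measurable SX"
  shows "(\<integral>z. indicator label_one z * g (fst z) \<partial>P) = (\<integral>u. \<eta> u * g u \<partial>marginal)"
proof -
  have "(\<integral>z. indicator label_one z * g (fst z) \<partial>P) = (\<integral>z. g (fst z) \<partial>density P (indicator label_one))"
    using integral_density[of "\<lambda>z. g (fst z)" P "indicator label_one"] by (simp add: ennreal_indicator)
  also have "\<dots> = (\<integral>u. g u \<partial>distr (density P (indicator label_one)) SX fst)"
    by (rule integral_distr[symmetric]) simp_all
  also have "\<dots> = (\<integral>u. \<eta> u * g u \<partial>marginal)"
    unfolding distr_label_one_eq_density using cond_prob_in_unit_interval_AE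
    by (subst integral_density) (auto elim: eventually_mono)
  finally show ?thesis .
qed

lemma borel_measurable_hinge_loss [measurable]:
  assumes [measurable]: "f \<in> borel_measurable SX"
  shows "hinge_loss f \<in> borel_measurable P"
  unfolding hinge_loss_def[abs_def] by measurable

lemma integrable_hinge_loss:
  assumes [measurable]: "f \<in> borel_measurable SX" and f_range: "\<And>u. u \<in> space SX \<Longrightarrow> f u \<in> {-1..1}"
  shows "integrable P (hinge_loss f)"
proof (rule integrable_const_bound[where B=2])
  show "AE z in P. norm (hinge_loss f z) \<le> 2"
    using AE_label_space by eventually_elim (auto simp: hinge_loss_def dest!: f_range)
qed simp

lemma hinge_excess_eq_loss_integral:
  assumes [measurable]: "f \<in> borel_measurable SX" and f_range: "\<And>u. u \<in> space SX \<Longrightarrow> f u \<in> {-1..1}"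
  shows "hinge_risk P f - hinge_opt P \<eta> = (\<integral>z. hinge_loss f z - hinge_loss (bayes \<eta>) z \<partial>P)"
proof -
  have "integrable P (hinge_loss (bayes \<eta>))"
    by (rule integrable_hinge_loss) (simp_all add: bayes_def)
  then show ?thesis
    using integrable_hinge_loss[OF assms]
    by (simp add: hinge_opt_def hinge_risk_eq_integral Bochner_Integration.integral_diff)
qed

lemma hinge_excess_eq_cond_prob_integral:
  assumes [measurable]: "f \<in> borel_measurable SX" and f_range: "\<And>u. u \<in> space SX \<Longrightarrow> f u \<in> {-1..1}"
  shows "hinge_risk P f - hinge_opt P \<eta> = (\<integral>u. (2 * \<eta> u - 1) * (bayes \<eta> u - f u) \<partial>marginal)"
proof -
  interpret X: prob_space marginal
    by (rule prob_space_marginal)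
  define g where "g u = bayes \<eta> u - f u" for u
  have [measurable]: "g \<in> borel_measurable SX"
    unfolding g_def[abs_def] by measurable
  have g_bounded: "\<bar>g u\<bar> \<le> 2" if "u \<in> space SX" for u
    using f_range[OF that] bayes_in_interval[of \<eta> u] by (auto simp: g_def)
  have integrable_g_fst: "integrable P (\<lambda>z. g (fst z))" "integrable P (\<lambda>z. indicator label_one z * g (fst z))"
    by (auto intro!: integrable_const_bound[where B=2] AE_I2 simp: space_P indicator_def g_bounded)
  have "hinge_risk P f - hinge_opt P \<eta> = (\<integral>z. hinge_loss f z - hinge_loss (bayes \<eta>) z \<partial>P)"
    by (rule hinge_excess_eq_loss_integral) fact+
  also have "\<dots> = (\<integral>z. 2 * (indicator label_one z * g (fst z)) - g (fst z) \<partial>P)"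
  proof (rule integral_cong_AE)
    show "AE z in P. hinge_loss f z - hinge_loss (bayes \<eta>) z = 2 * (indicator label_one z * g (fst z)) - g (fst z)"
      using AE_label_space
    proof eventually_elim
      case (elim z)
      then show ?case
        using f_range[of "fst z"] bayes_in_interval[of \<eta> "fst z"]
        by (auto simp: hinge_loss_eq_linear g_def indicator_def mem_Times_iff algebra_simps)
    qed
  qed simp_all
  also have "\<dots> = 2 * (\<integral>u. \<eta> u * g u \<partial>marginal) - (\<integral>u. g u \<partial>marginal)"
    using integrable_g_fst by (simp add: integral_label_one marginal_def integral_distr)
  also have "\<dots> = (\<integral>u. (2 * \<eta> u - 1) * g u \<partial>marginal)"
  proof -
    have integrable_g: "integrable marginal g"
      by (auto intro!: X.integrable_const_bound[where B=2] AE_I2 g_bounded)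
    have "AE u in marginal. \<bar>\<eta> u * g u\<bar> \<le> 2"
      using cond_prob_in_unit_interval_AE AE_space[of marginal]
    proof eventually_elim
      case (elim u)
      then have "\<bar>\<eta> u\<bar> * \<bar>g u\<bar> \<le> 1 * 2"
        using g_bounded by (intro mult_mono) auto
      then show ?case
        by (simp add: abs_mult)
    qed
    then have "integrable marginal (\<lambda>u. \<eta> u * g u)"
      by (intro X.integrable_const_bound[where B=2]) auto
    with integrable_g show ?thesis
      by (simp add: left_diff_distrib mult.assoc)
  qed
  finally show ?thesis
    by (simp add: g_def)
qed

lemma hinge_opt_le_hinge_risk:
  assumes [measurable]: "f \<in> borel_measurable SX" and f_range: "\<And>u. u \<in> space SX \<Longrightarrow> f u \<in> {-1..1}"
  shows "hinge_opt P \<eta> \<le> hinge_risk P f"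
proof -
  have "0 \<le> (\<integral>u. (2 * \<eta> u - 1) * (bayes \<eta> u - f u) \<partial>marginal)"
    by (intro Bochner_Integration.integral_nonneg)
       (auto simp: bayes_def dest!: f_range intro: mult_nonneg_nonneg mult_nonpos_nonpos)
  then show ?thesis
    using hinge_excess_eq_cond_prob_integral[OF assms] by simp
qed

lemma second_moment_excess_loss_le:
  assumes [measurable]: "f \<in> borel_measurable SX" and f_range: "\<And>u. u \<in> space SX \<Longrightarrow> f u \<in> {-1..1}"
    and "MAH SX P \<eta> \<kappa> c"
  shows "(\<integral>z. (hinge_loss f z - hinge_loss (bayes \<eta>) z)\<^sup>2 \<partial>P)
           \<le> 2 * c * (hinge_risk P f - hinge_opt P \<eta>) powr (1 / \<kappa>)"
proof -
  let ?D = "\<lambda>z. hinge_loss f z - hinge_loss (bayes \<eta>) z"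
  let ?d = "\<lambda>z. \<bar>f (fst z) - bayes \<eta> (fst z)\<bar>"
  have bounds: "AE z in P. (?D z)\<^sup>2 \<le> 2 * ?d z \<and> ?d z \<le> 2"
    using AE_label_space
  proof eventually_elim
    case (elim z)
    then have "\<bar>?D z\<bar> = ?d z" and "?d z \<le> 2"
      using f_range[of "fst z"] bayes_in_interval[of \<eta> "fst z"] abs_hinge_loss_diff[of z f "bayes \<eta>"]
      by auto
    then have "(?D z)\<^sup>2 \<le> 2 * ?d z"
      by (metis abs_ge_zero abs_mult_self_eq mult_right_mono power2_eq_square)
    with \<open>?d z \<le> 2\<close> show ?case
      by simp
  qed
  have "(\<integral>z. (?D z)\<^sup>2 \<partial>P) \<le> (\<integral>z. 2 * ?d z \<partial>P)"
  proof (rule integral_mono_AE[OF _ _ bounds[THEN eventually_mono]])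
    have "AE z in P. norm ((?D z)\<^sup>2) \<le> 4"
      using bounds by eventually_elim auto
    then show "integrable P (\<lambda>z. (?D z)\<^sup>2)"
      by (intro integrable_const_bound[where B=4]) auto
    show "integrable P (\<lambda>z. 2 * ?d z)"
      by (rule integrable_const_bound[where B=4]) (use bounds in \<open>auto elim!: eventually_mono\<close>)
  qed simp
  also have "\<dots> \<le> 2 * (c * (hinge_risk P f - hinge_opt P \<eta>) powr (1 / \<kappa>))"
    using assms by (simp add: MAH_def)
  finally show ?thesis
    by simp
qed

lemma borel_measurable_Zx [measurable]:
  assumes [measurable]: "f \<in> borel_measurable SX"
  shows "Zx P \<eta> n x f \<in> borel_measurable (PiM {..<n} (\<lambda>_. P))"
  unfolding Zx_def[abs_def] emp_hinge_risk_eq_sum by measurable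

lemma abs_excess_loss_le_AE:
  assumes f_range: "\<And>u. u \<in> space SX \<Longrightarrow> f u \<in> {-1..1}"
  shows "AE z in P. \<bar>hinge_loss f z - hinge_loss (bayes \<eta>) z\<bar> \<le> 2"
  using AE_label_space
proof eventually_elim
  case (elim z)
  then show ?case
    using f_range[of "fst z"] bayes_in_interval[of \<eta> "fst z"] abs_hinge_loss_diff[of z f "bayes \<eta>"]
    by auto
qed

lemma centered_excess_loss:
  fixes f :: "'a \<Rightarrow> real"
  defines "\<mu> \<equiv> hinge_risk P f - hinge_opt P \<eta>"
  defines "W \<equiv> \<lambda>z. \<mu> - (hinge_loss f z - hinge_loss (bayes \<eta>) z)"
  assumes [measurable]: "f \<in> borel_measurable SX" and f_range: "\<And>u. u \<in> space SX \<Longrightarrow> f u \<in> {-1..1}"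
    and "MAH SX P \<eta> \<kappa> c"
  shows "AE z in P. W z \<le> 4 \<and> \<bar>W z\<bar> \<le> 4"
    and "expectation W = 0"
    and "expectation (\<lambda>z. (W z)\<^sup>2) \<le> 2 * c * \<mu> powr (1 / \<kappa>)"
proof -
  define D where "D z = hinge_loss f z - hinge_loss (bayes \<eta>) z" for z
  have W_eq: "W = (\<lambda>z. \<mu> - D z)"
    by (simp add: W_def D_def)
  have D_bounded: "AE z in P. \<bar>D z\<bar> \<le> 2"
    unfolding D_def by (rule abs_excess_loss_le_AE) fact
  have "AE z in P. norm ((D z)\<^sup>2) \<le> 4"
    using D_bounded
  proof eventually_elim
    case (elim z)
    then have "\<bar>D z\<bar>\<^sup>2 \<le> 2\<^sup>2"
      by (intro power_mono) auto
    then show ?case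
      by simp
  qed
  then have integrable_D: "integrable P D" "integrable P (\<lambda>z. (D z)\<^sup>2)"
    using D_bounded by (auto intro!: integrable_const_bound simp: D_def[abs_def])
  have mean_D: "expectation D = \<mu>"
    unfolding D_def[abs_def] \<mu>_def by (rule hinge_excess_eq_loss_integral[symmetric]) fact+
  have "0 \<le> \<mu>"
    using hinge_opt_le_hinge_risk[OF assms(3,4)] by (simp add: \<mu>_def)
  have "\<mu> \<le> expectation (\<lambda>_. 2)"
    unfolding mean_D[symmetric] using D_bounded
    by (intro integral_mono_AE integrable_D) (auto elim: eventually_mono)
  then have "\<mu> \<le> 2"
    by (simp add: prob_space)
  show "AE z in P. W z \<le> 4 \<and> \<bar>W z\<bar> \<le> 4"
    using D_bounded by eventually_elim (use \<open>0 \<le> \<mu>\<close> \<open>\<mu> \<le> 2\<close> in \<open>auto simp: W_eq\<close>)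
  show "expectation W = 0"
    using integrable_D mean_D by (simp add: W_eq prob_space)
  have "(\<lambda>z. (W z)\<^sup>2) = (\<lambda>z. (D z)\<^sup>2 - 2 * \<mu> * D z + \<mu>\<^sup>2)"
    by (auto simp: W_eq power2_eq_square algebra_simps)
  then have "expectation (\<lambda>z. (W z)\<^sup>2) = expectation (\<lambda>z. (D z)\<^sup>2) - 2 * \<mu> * expectation D + \<mu>\<^sup>2"
    using integrable_D by (simp add: prob_space)
  also have "\<dots> \<le> expectation (\<lambda>z. (D z)\<^sup>2)"
    by (simp add: mean_D power2_eq_square)
  also have "\<dots> \<le> 2 * c * \<mu> powr (1 / \<kappa>)"
    unfolding D_def \<mu>_def by (rule second_moment_excess_loss_le) fact+
  finally show "expectation (\<lambda>z. (W z)\<^sup>2) \<le> 2 * c * \<mu> powr (1 / \<kappa>)" .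
qed

lemma prob_Zx_greater_le:
  assumes [measurable]: "f \<in> borel_measurable SX" and f_range: "\<And>u. u \<in> space SX \<Longrightarrow> f u \<in> {-1..1}"
    and "1 \<le> \<kappa>" "0 < c" "MAH SX P \<eta> \<kappa> c" "0 < t" "0 < x"
  shows "measure (PiM {..<n} (\<lambda>_. P)) {\<omega> \<in> space (PiM {..<n} (\<lambda>_. P)). t < Zx P \<eta> n x f \<omega>}
           \<le> exp (- (real n * (t * x)\<^sup>2) / (8 * c * x powr (1 / \<kappa>))) + exp (- (3 * real n * t * x) / 16)"
proof -
  let ?Pn = "PiM {..<n} (\<lambda>_. P)"
  interpret Pn: prob_space ?Pn
    by (rule prob_space_PiM) (rule prob_space_axioms)
  define \<mu> where "\<mu> = hinge_risk P f - hinge_opt P \<eta>"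
  define W where "W = (\<lambda>z. \<mu> - (hinge_loss f z - hinge_loss (bayes \<eta>) z))"
  have [measurable]: "W \<in> borel_measurable P"
    unfolding W_def by measurable
  have "0 \<le> \<mu>"
    using hinge_opt_le_hinge_risk[OF assms(1,2)] by (simp add: \<mu>_def)
  have W_bounded: "AE z in P. W z \<le> 4 \<and> \<bar>W z\<bar> \<le> 4"
    and W_centered: "expectation W = 0"
    and "expectation (\<lambda>z. (W z)\<^sup>2) \<le> 2 * c * \<mu> powr (1 / \<kappa>)"
    using centered_excess_loss[OF assms(1,2,5)] by (simp_all add: W_def \<mu>_def)
  moreover have "2 * c * \<mu> powr (1 / \<kappa>) \<le> 2 * c * (\<mu> + x) powr (1 / \<kappa>)"
    using \<open>0 \<le> \<mu>\<close> \<open>0 < x\<close> \<open>1 \<le> \<kappa>\<close> \<open>0 < c\<close> by (intro mult_left_mono powr_mono2) auto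
  ultimately have W_variance: "expectation (\<lambda>z. (W z)\<^sup>2) \<le> 2 * c * (\<mu> + x) powr (1 / \<kappa>)"
    by linarith
  have "measure ?Pn {\<omega> \<in> space ?Pn. t < Zx P \<eta> n x f \<omega>}
      \<le> measure ?Pn {\<omega> \<in> space ?Pn. real n * (t * (\<mu> + x)) \<le> (\<Sum>i<n. W (\<omega> i))}"
    using Zx_greater_imp_sum_ge[of t P \<eta> n x f] \<open>0 \<le> \<mu>\<close> \<open>0 < x\<close>
    by (intro Pn.finite_measure_mono) (auto simp: \<mu>_def W_def)
  also have "\<dots> \<le> exp (- (real n * (t * (\<mu> + x))\<^sup>2) / (2 * (2 * c * (\<mu> + x) powr (1 / \<kappa>) + 4 * (t * (\<mu> + x)) / 3)))"
    using \<open>0 \<le> \<mu>\<close> assms by (intro Bernstein_iid[OF _ W_bounded W_centered W_variance]) auto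
  also have "\<dots> \<le> exp (- (real n * (t * x)\<^sup>2) / (8 * c * x powr (1 / \<kappa>))) + exp (- (3 * real n * t * x) / 16)"
    using \<open>0 \<le> \<mu>\<close> assms by (intro Bernstein_exponent_split) auto
  finally show ?thesis .
qed

end

theorem lemma5:
  fixes SX :: "'a measure" and P :: "('a \<times> real) measure" and \<eta> :: "'a \<Rightarrow> real"
    and F :: "('a \<Rightarrow> real) set" and \<kappa> c t x :: real and n :: nat
  assumes "prob_space P"
    and "sets P = sets (SX \<Otimes>\<^sub>M (borel :: real measure))"
    and "AE z in P. snd z \<in> {-1, 1}"
    and "is_cond_prob_Y1 SX P \<eta>"
    and "finite F"
    and "\<forall>f\<in>F. f \<in> borel_measurable SX \<and> (\<forall>u\<in>space SX. f u \<in> {-1..1})"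
    and "\<kappa> \<ge> 1" and "MA SX P \<eta> \<kappa>"
    and "c > 0" and "MAH SX P \<eta> \<kappa> c"
    and "t > 0" and "x > 0"
  shows "measure (PiM {..<n} (\<lambda>_. P))
           {\<omega> \<in> space (PiM {..<n} (\<lambda>_. P)). \<exists>f\<in>F. Zx P \<eta> n x f \<omega> > t}
         \<le> real (card F) *
           ((1 + 8 * c * x powr (1 / \<kappa>) / (real n * (t * x)\<^sup>2))
              * exp (- (real n * (t * x)\<^sup>2) / (8 * c * x powr (1 / \<kappa>)))
            + (1 + 16 / (3 * real n * t * x)) * exp (- (3 * real n * t * x) / 16))"
proof -
  interpret binary_classification P SX \<eta>
    using assms(1-4) by (simp add: binary_classification_def binary_classification_axioms_def)
  let ?Pn = "PiM {..<n} (\<lambda>_. P)"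
  let ?event = "\<lambda>f. {\<omega> \<in> space ?Pn. t < Zx P \<eta> n x f \<omega>}"
  define u where "u = exp (- (real n * (t * x)\<^sup>2) / (8 * c * x powr (1 / \<kappa>)))"
  define v where "v = exp (- (3 * real n * t * x) / 16)"
  have "measure ?Pn {\<omega> \<in> space ?Pn. \<exists>f\<in>F. Zx P \<eta> n x f \<omega> > t} = measure ?Pn (\<Union>f\<in>F. ?event f)"
    by (rule arg_cong[where f="measure ?Pn"]) auto
  also have "\<dots> \<le> (\<Sum>f\<in>F. measure ?Pn (?event f))"
    using assms(5,6) by (intro measure_UNION_le) auto
  also have "\<dots> \<le> (\<Sum>f\<in>F. u + v)"
  proof (rule sum_mono)
    fix f
    assume "f \<in> F"
    then show "measure ?Pn (?event f) \<le> u + v"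
      unfolding u_def v_def using assms by (intro prob_Zx_greater_le) auto
  qed
  also have "\<dots> \<le> real (card F) *
      ((1 + 8 * c * x powr (1 / \<kappa>) / (real n * (t * x)\<^sup>2)) * u + (1 + 16 / (3 * real n * t * x)) * v)"
    using assms(9,11,12) by (auto simp: u_def v_def intro!: mult_left_mono add_mono)
  finally show ?thesis
    by (simp add: u_def v_def)
qed

end
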